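(* The family of power-divergence copulas is negatively ordered: if $-\infty<\lambda_1<\lambda_2<\infty$, then $C_{\lambda_1}(u_1,u_2)\ge C_{\lambda_2}(u_1,u_2)$ for all $u_1,u_2\in[0,1]$.
   Context: For $\lambda\in\mathbb{R}$ define $\phi_\lambda$ on $[0,\infty)$ by $\phi_\lambda(x)=\frac{1}{\lambda(\lambda+1)}(x^{\lambda+1}-x+\lambda(1-x))$ for $\lambda\neq-1,0$; $\phi_0(x)=1-x+x\log x$; $\phi_{-1}(x)=x-1-\log x$; values at $x=0$ are limits, so $\phi_\lambda(0)=1/(\lambda+1)$ for $\lambda>-1$ and $\phi_\lambda(0)=\infty$ for $\lambda\le-1$. On $[0,1]$, $\phi_\lambda$ is convex, strictly decreasing, $\phi_\lambda(1)=0$. The pseudoinverse is $\phi_\lambda^{[-1]}(t)=\phi_\lambda^{-1}(t)$ (inverse of $\phi_\lambda|_{[0,1]}$) for $0\le t<\phi_\lambda(0)$ and $0$ for $t\ge\phi_\lambda(0)$. The power-divergence (PD) copula is $C_\lambda(u_1,u_2)=\phi_\lambda^{[-1]}(\phi_\lambda(u_1)+\phi_\lambda(u_2))$, $u_1,u_2\in[0,1]$ (with $\phi_\lambda^{[-1]}(\infty)=0$). *)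

theory Defs
  imports "HOL-Analysis.Analysis" "HOL-Library.Extended_Real"
begin

definition pd_phi :: "real \<Rightarrow> real \<Rightarrow> ereal" where
  "pd_phi lam x =
     (if x = 0 then (if lam > -1 then ereal (1 / (lam + 1)) else \<infinity>)
      else if lam = 0 then ereal (1 - x + x * ln x)
      else if lam = -1 then ereal (x - 1 - ln x)
      else ereal ((x powr (lam + 1) - x + lam * (1 - x)) / (lam * (lam + 1))))"

definition pd_pinv :: "real \<Rightarrow> ereal \<Rightarrow> real" where
  "pd_pinv lam t =
     (if t < pd_phi lam 0 then (THE x. x \<in> {0..1} \<and> pd_phi lam x = t) else 0)"

definition pd_copula :: "real \<Rightarrow> real \<Rightarrow> real \<Rightarrow> real" where
  "pd_copula lam u1 u2 = pd_pinv lam (pd_phi lam u1 + pd_phi lam u2)"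

end

theory Submission
  imports Defs "HOL-Real_Asymp.Real_Asymp"
begin

text \<open>On (0,1] the generator phi(lam) is a smooth real function whose derivative is the
  Box-Cox transform (x powr lam - 1) / lam. Since C(lam, u1, u2) is the point c with
  phi(lam, c) = phi(lam, u1) + phi(lam, u2) (or 0 if there is none), the ordering reduces to:
  phi2 c = phi2 a + phi2 b implies phi1 a + phi1 b \<le> phi1 c, i.e. superadditivity of
  phi1 composed with the inverse of phi2. Cauchy's mean value theorem on [c,b] and on [a,1]
  yields this as soon as phi1'/phi2' decreases on (0,1). The reflection identity
  box_cox lam x = x powr lam * box_cox (-lam) x turns this into the monotonicity of
  box_cox lam x in lam, which is the monotonicity of the slope (exp z - 1) / z of the convex
  exponential.\<close>

definition exp_slope :: "real \<Rightarrow> real" where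
  "exp_slope z = (if z = 0 then 1 else (exp z - 1) / z)"

lemma exp_slope_le_1: "z \<le> 0 \<Longrightarrow> exp_slope z \<le> 1"
  using exp_ge_add_one_self[of z] by (simp add: exp_slope_def divide_simps del: exp_ge_add_one_self)

lemma one_le_exp_slope: "0 \<le> z \<Longrightarrow> 1 \<le> exp_slope z"
  using exp_ge_add_one_self[of z] by (simp add: exp_slope_def divide_simps del: exp_ge_add_one_self)

lemma exp_slope_mono:
  assumes "z1 \<le> z2"
  shows "exp_slope z1 \<le> exp_slope z2"
proof -
  consider "z1 \<le> 0" "0 \<le> z2" | "z1 < z2" "z2 < 0" | "0 < z1" "z1 < z2" | "z1 = z2"
    using assms by linarith
  then show ?thesis
  proof cases
    case 1
    then show ?thesis using exp_slope_le_1 one_le_exp_slope by (meson order.trans)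
  next
    case 2
    then show ?thesis
      using convex_on_slope_le(2)[OF exp_convex, where x = z1 and t = z2 and y = 0]
      by (simp add: exp_slope_def)
  next
    case 3
    then show ?thesis
      using convex_on_slope_le(1)[OF exp_convex, where x = 0 and t = z1 and y = z2]
      by (simp add: exp_slope_def divide_simps algebra_simps)
  qed simp
qed

definition box_cox :: "real \<Rightarrow> real \<Rightarrow> real" where
  "box_cox lam x = (if lam = 0 then ln x else (x powr lam - 1) / lam)"

lemma box_cox_1 [simp]: "box_cox lam 1 = 0"
  by (simp add: box_cox_def)

lemma box_cox_exp: "box_cox lam (exp u) = u * exp_slope (lam * u)"
  by (simp add: box_cox_def exp_slope_def powr_def field_simps)

lemma box_cox_mono_param:
  assumes "a \<le> b" "0 < x"
  shows "box_cox a x \<le> box_cox b x"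
proof -
  obtain u where x: "x = exp u"
    using assms(2) by (metis exp_ln)
  show ?thesis
  proof (cases "u \<le> 0")
    case True
    then have "exp_slope (b * u) \<le> exp_slope (a * u)"
      using assms by (intro exp_slope_mono mult_right_mono_neg)
    then show ?thesis
      unfolding x box_cox_exp using True by (simp add: mult_left_mono_neg)
  next
    case False
    then have "exp_slope (a * u) \<le> exp_slope (b * u)"
      using assms by (intro exp_slope_mono mult_right_mono) auto
    then show ?thesis
      unfolding x box_cox_exp using False by (simp add: mult_left_mono)
  qed
qed

lemma box_cox_reflect: "0 < x \<Longrightarrow> box_cox lam x = x powr lam * box_cox (- lam) x"
  by (simp add: box_cox_def powr_minus field_simps)

lemma box_cox_powr_le:
  assumes "a \<le> b" "0 < x"
  shows "x powr (a - b) * box_cox b x \<le> box_cox a x"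
proof -
  have "x powr (a - b) * box_cox b x = x powr a * box_cox (- b) x"
    using assms by (simp add: box_cox_reflect[of x b] powr_add[symmetric])
  also have "\<dots> \<le> x powr a * box_cox (- a) x"
    using assms by (intro mult_left_mono box_cox_mono_param) auto
  also have "\<dots> = box_cox a x"
    using assms by (simp add: box_cox_reflect[of x a])
  finally show ?thesis .
qed

lemma box_cox_neg:
  assumes "0 < x" "x < 1"
  shows "box_cox lam x < 0"
proof -
  consider "lam = 0" | "lam > 0" | "lam < 0" by linarith
  then show ?thesis
  proof cases
    case 1
    then show ?thesis using assms by (simp add: box_cox_def)
  next
    case 2
    have "x powr lam < 1 powr lam" using assms 2 by (intro powr_less_mono2) auto
    then show ?thesis using 2 by (simp add: box_cox_def divide_simps)
  next
    case 3
    have "1 powr lam < x powr lam" using assms 3 by (intro powr_less_mono2_neg) auto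
    then show ?thesis using 3 by (simp add: box_cox_def divide_simps)
  qed
qed

lemma box_cox_nonpos: "0 < x \<Longrightarrow> x \<le> 1 \<Longrightarrow> box_cox lam x \<le> 0"
  using box_cox_neg[of x lam] by (cases "x = 1") auto

lemma has_real_derivative_box_cox:
  "0 < x \<Longrightarrow> (box_cox lam has_real_derivative x powr (lam - 1)) (at x)"
  unfolding box_cox_def
  by (cases "lam = 0") (auto intro!: derivative_eq_intros simp: powr_minus divide_simps)

lemma box_cox_ratio_antimono:
  assumes "a \<le> b" "0 < x" "x \<le> y" "y \<le> 1"
  shows "box_cox a y * box_cox b x \<le> box_cox a x * box_cox b y"
proof -
  define F where "F t = box_cox a t * box_cox b y - box_cox a y * box_cox b t" for t
  have "F y \<le> F x"
  proof (rule DERIV_nonpos_imp_nonincreasing[OF \<open>x \<le> y\<close>])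
    fix z assume z: "x \<le> z" "z \<le> y"
    have "z powr (a - b) * box_cox b y \<le> y powr (a - b) * box_cox b y"
      using assms z by (intro mult_right_mono_neg powr_mono2' box_cox_nonpos) auto
    also have "\<dots> \<le> box_cox a y"
      using assms by (intro box_cox_powr_le) auto
    finally have "z powr (b - 1) * (z powr (a - b) * box_cox b y - box_cox a y) \<le> 0"
      by (intro mult_nonneg_nonpos) auto
    moreover have "z powr (b - 1) * z powr (a - b) = z powr (a - 1)"
      by (simp add: powr_add[symmetric])
    moreover have "(F has_real_derivative
        z powr (a - 1) * box_cox b y - box_cox a y * z powr (b - 1)) (at z)"
      unfolding F_def using assms z
      by (auto intro!: derivative_eq_intros has_real_derivative_box_cox)
    ultimately show "\<exists>D. (F has_real_derivative D) (at z) \<and> D \<le> 0"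
      by (metis (no_types, lifting) right_diff_distrib mult.assoc mult.commute)
  qed
  then show ?thesis
    by (simp add: F_def)
qed

definition pd_phi_real :: "real \<Rightarrow> real \<Rightarrow> real" where
  "pd_phi_real lam x =
     (if lam = 0 then 1 - x + x * ln x
      else if lam = -1 then x - 1 - ln x
      else (x powr (lam + 1) - x + lam * (1 - x)) / (lam * (lam + 1)))"

lemma pd_phi_eq_real: "x \<noteq> 0 \<Longrightarrow> pd_phi lam x = ereal (pd_phi_real lam x)"
  by (simp add: pd_phi_def pd_phi_real_def)

lemma pd_phi_real_1 [simp]: "pd_phi_real lam 1 = 0"
  by (simp add: pd_phi_real_def)

lemma has_real_derivative_pd_phi_real:
  assumes "0 < x"
  shows "(pd_phi_real lam has_real_derivative box_cox lam x) (at x)"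
proof -
  consider "lam = 0" | "lam = -1" | "lam \<noteq> 0" "lam + 1 \<noteq> 0" by linarith
  then show ?thesis
  proof cases
    case 1
    then show ?thesis unfolding pd_phi_real_def box_cox_def using assms
      by (auto intro!: derivative_eq_intros)
  next
    case 2
    then show ?thesis unfolding pd_phi_real_def box_cox_def using assms
      by (auto intro!: derivative_eq_intros simp: powr_minus divide_simps)
  next
    case 3
    have "((\<lambda>x. x powr (lam + 1) - x + lam * (1 - x)) has_real_derivative
        (lam + 1) * x powr lam - 1 - lam) (at x)"
      using has_real_derivative_powr[OF assms, of "lam + 1"] assms
      by (auto intro!: derivative_eq_intros)
    then have "((\<lambda>x. (x powr (lam + 1) - x + lam * (1 - x)) / (lam * (lam + 1))) has_real_derivative
        ((lam + 1) * x powr lam - 1 - lam) / (lam * (lam + 1))) (at x)"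
      by (rule DERIV_cdivide)
    moreover have "((lam + 1) * x powr lam - 1 - lam) / (lam * (lam + 1)) = box_cox lam x"
      using 3 by (simp add: box_cox_def divide_simps) (simp add: algebra_simps)
    ultimately show ?thesis
      using 3 by (simp add: pd_phi_real_def[abs_def])
  qed
qed

lemma pd_phi_real_strict_antimono:
  assumes "0 < x" "x < y" "y \<le> 1"
  shows "pd_phi_real lam y < pd_phi_real lam x"
proof -
  have "\<exists>z>x. z < y \<and> pd_phi_real lam y - pd_phi_real lam x = (y - x) * box_cox lam z"
    by (rule MVT2[OF \<open>x < y\<close>]) (use assms in \<open>auto intro: has_real_derivative_pd_phi_real\<close>)
  then obtain z where z: "x < z" "z < y"
    and mvt: "pd_phi_real lam y - pd_phi_real lam x = (y - x) * box_cox lam z"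
    by blast
  have "(y - x) * box_cox lam z < 0"
    using assms z by (intro mult_pos_neg box_cox_neg) auto
  then show ?thesis
    using mvt by linarith
qed

lemma pd_phi_real_le_iff:
  assumes "0 < x" "x \<le> 1" "0 < y" "y \<le> 1"
  shows "pd_phi_real lam x \<le> pd_phi_real lam y \<longleftrightarrow> y \<le> x"
  using pd_phi_real_strict_antimono[of x y lam] pd_phi_real_strict_antimono[of y x lam] assms
  by (cases x y rule: linorder_cases) auto

lemma pd_phi_real_nonneg: "0 < x \<Longrightarrow> x \<le> 1 \<Longrightarrow> 0 \<le> pd_phi_real lam x"
  using pd_phi_real_le_iff[of 1 x lam] by simp

lemma add_le_of_derivative_ratio_antimono:
  fixes f g f' g' :: "real \<Rightarrow> real"
  assumes f: "\<And>x. c \<le> x \<Longrightarrow> x \<le> 1 \<Longrightarrow> (f has_real_derivative f' x) (at x)"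
    and g: "\<And>x. c \<le> x \<Longrightarrow> x \<le> 1 \<Longrightarrow> (g has_real_derivative g' x) (at x)"
    and g'_neg: "\<And>x. c < x \<Longrightarrow> x < 1 \<Longrightarrow> g' x < 0"
    \<comment> \<open>f'/g' is antitone, stated without dividing by the negative g'\<close>
    and ratio: "\<And>x y. c < x \<Longrightarrow> x < y \<Longrightarrow> y < 1 \<Longrightarrow> f' y * g' x \<le> f' x * g' y"
    and "f 1 = 0" "g 1 = 0"
    and "c < b" "b \<le> a" "a < 1"
    and sum: "g c = g a + g b"
  shows "f a + f b \<le> f c"
proof -
  have cont: "isCont f x" "isCont g x" if "c \<le> x" "x \<le> 1" for x
    using f g that by (auto intro: DERIV_isCont)
  obtain \<xi> where \<xi>: "c < \<xi>" "\<xi> < b" "(f b - f c) * g' \<xi> = (g b - g c) * f' \<xi>"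
    using GMVT'[OF \<open>c < b\<close>, of f g g' f'] assms cont by auto
  obtain \<eta> where \<eta>: "a < \<eta>" "\<eta> < 1" "(f 1 - f a) * g' \<eta> = (g 1 - g a) * f' \<eta>"
    using GMVT'[OF \<open>a < 1\<close>, of f g g' f'] assms cont by auto
  obtain \<zeta> where \<zeta>: "a < \<zeta>" "\<zeta> < 1" "g 1 - g a = (1 - a) * g' \<zeta>"
    using MVT2[OF \<open>a < 1\<close>, of g g'] assms by auto
  have "(1 - a) * g' \<zeta> < 0"
    using \<zeta> assms by (intro mult_pos_neg g'_neg) auto
  then have "0 \<le> g a"
    using \<zeta>(3) \<open>g 1 = 0\<close> by linarith
  have slopes: "(f c - f b) * g' \<xi> = g a * f' \<xi>" "f a * g' \<eta> = g a * f' \<eta>"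
    using \<xi>(3) \<eta>(3) sum assms by (simp_all add: algebra_simps)
  have "0 < g' \<xi> * g' \<eta>"
    using g'_neg \<xi> \<eta> assms by (simp add: mult_neg_neg)
  moreover have "f a * (g' \<xi> * g' \<eta>) \<le> (f c - f b) * (g' \<xi> * g' \<eta>)"
  proof -
    have "f a * (g' \<xi> * g' \<eta>) = g a * (f' \<eta> * g' \<xi>)"
      using slopes by (simp add: algebra_simps)
    also have "\<dots> \<le> g a * (f' \<xi> * g' \<eta>)"
      using \<open>0 \<le> g a\<close> \<xi> \<eta> assms by (intro mult_left_mono ratio) auto
    also have "\<dots> = (f c - f b) * (g' \<xi> * g' \<eta>)"
      using slopes by (simp add: algebra_simps)
    finally show ?thesis .
  qed
  ultimately show ?thesis
    by (simp add: mult_le_cancel_right_pos)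
qed

lemma pd_phi_real_add_le:
  assumes "lam1 \<le> lam2" "0 < a" "a \<le> 1" "0 < b" "b \<le> 1" "0 < c" "c \<le> 1"
    and "pd_phi_real lam2 c = pd_phi_real lam2 a + pd_phi_real lam2 b"
  shows "pd_phi_real lam1 a + pd_phi_real lam1 b \<le> pd_phi_real lam1 c"
proof -
  have ordered: "pd_phi_real lam1 a + pd_phi_real lam1 b \<le> pd_phi_real lam1 c"
    if "0 < b" "b \<le> a" "a \<le> 1"
      and sum: "pd_phi_real lam2 c = pd_phi_real lam2 a + pd_phi_real lam2 b" for a b
  proof (cases "a = 1")
    case True
    then have "c = b"
      using sum pd_phi_real_le_iff[of c b lam2] pd_phi_real_le_iff[of b c lam2] that assms
      by auto
    then show ?thesis using True by simp
  next
    case False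
    then have "0 < pd_phi_real lam2 a"
      using pd_phi_real_strict_antimono[of a 1 lam2] that by simp
    have "c < b"
    proof (rule ccontr)
      assume "\<not> c < b"
      then have "pd_phi_real lam2 c \<le> pd_phi_real lam2 b"
        using pd_phi_real_le_iff[of c b lam2] that assms by simp
      then show False
        using sum \<open>0 < pd_phi_real lam2 a\<close> by linarith
    qed
    show ?thesis
      using that False \<open>c < b\<close> \<open>0 < c\<close> \<open>lam1 \<le> lam2\<close>
      by (intro add_le_of_derivative_ratio_antimono[where f' = "box_cox lam1" and g' = "box_cox lam2"])
        (auto intro: has_real_derivative_pd_phi_real box_cox_neg box_cox_ratio_antimono)
  qed
  show ?thesis
    using ordered[of a b] ordered[of b a] assms by (cases "b \<le> a") (auto simp: add.commute)
qed

lemma tendsto_pd_phi_real_at_0: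
  assumes "-1 < lam"
  shows "(pd_phi_real lam \<longlongrightarrow> 1 / (lam + 1)) (at_right 0)"
proof (cases "lam = 0")
  case True
  then show ?thesis unfolding pd_phi_real_def by simp real_asymp
next
  case False
  have "((\<lambda>x::real. x powr (lam + 1)) \<longlongrightarrow> 0) (at_right 0)"
    using assms by real_asymp
  then have "((\<lambda>x. (x powr (lam + 1) - x + lam * (1 - x)) / (lam * (lam + 1))) \<longlongrightarrow>
      (0 - 0 + lam * (1 - 0)) / (lam * (lam + 1))) (at_right 0)"
    using assms False by (intro tendsto_intros) auto
  moreover have "(0 - 0 + lam * (1 - 0)) / (lam * (lam + 1)) = 1 / (lam + 1)"
    using False by simp
  ultimately show ?thesis
    using assms False by (simp add: pd_phi_real_def[abs_def])
qed

lemma filterlim_pd_phi_real_at_0: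
  assumes "lam \<le> -1"
  shows "filterlim (pd_phi_real lam) at_top (at_right 0)"
proof (cases "lam = -1")
  case True
  then show ?thesis unfolding pd_phi_real_def by simp real_asymp
next
  case False
  then have "lam + 1 < 0" "lam < 0"
    using assms by auto
  then show ?thesis
    unfolding pd_phi_real_def using False by simp (real_asymp simp: mult_neg_neg)
qed

lemma eventually_less_pd_phi_real:
  assumes "ereal t < pd_phi lam 0"
  shows "eventually (\<lambda>x. t < pd_phi_real lam x) (at_right 0)"
proof (cases "-1 < lam")
  case True
  then have "t < 1 / (lam + 1)"
    using assms by (simp add: pd_phi_def)
  then show ?thesis
    using tendsto_pd_phi_real_at_0[OF True] by (simp add: order_tendsto_iff)
next
  case False
  then show ?thesis
    using filterlim_pd_phi_real_at_0[of lam] by (simp add: filterlim_at_top_dense)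
qed

lemma pd_phi_real_less_pd_phi_0:
  assumes "0 < x" "x \<le> 1"
  shows "ereal (pd_phi_real lam x) < pd_phi lam 0"
proof (cases "-1 < lam")
  case True
  have "eventually (\<lambda>y. pd_phi_real lam (x / 2) \<le> pd_phi_real lam y) (at_right 0)"
    unfolding eventually_at_right_field using assms
    by (intro exI[of _ "x / 2"]) (auto intro!: less_imp_le[OF pd_phi_real_strict_antimono])
  then have "pd_phi_real lam (x / 2) \<le> 1 / (lam + 1)"
    using tendsto_lowerbound[OF tendsto_pd_phi_real_at_0[OF True]] by simp
  moreover have "pd_phi_real lam x < pd_phi_real lam (x / 2)"
    using assms by (intro pd_phi_real_strict_antimono) auto
  ultimately show ?thesis
    using True by (simp add: pd_phi_def)
qed (simp add: pd_phi_def)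

lemma pd_phi_real_surj:
  assumes "0 \<le> t" "ereal t < pd_phi lam 0"
  obtains x where "0 < x" "x \<le> 1" "pd_phi_real lam x = t"
proof -
  obtain b where "0 < b" and b: "\<And>y. 0 < y \<Longrightarrow> y < b \<Longrightarrow> t < pd_phi_real lam y"
    using eventually_less_pd_phi_real[OF assms(2)] by (auto simp: eventually_at_right_field)
  define e where "e = min (b / 2) (1 / 2)"
  have e: "t < pd_phi_real lam e" "0 < e" "e < 1"
    using b \<open>0 < b\<close> by (auto simp: e_def)
  have "\<exists>x. e \<le> x \<and> x \<le> 1 \<and> pd_phi_real lam x = t"
    by (rule IVT2) (use e assms in \<open>auto intro!: DERIV_isCont[OF has_real_derivative_pd_phi_real]\<close>)
  then obtain x where x: "e \<le> x" "x \<le> 1" "pd_phi_real lam x = t"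
    by blast
  show ?thesis
    by (rule that[OF _ x(2,3)]) (use x(1) e(2) in linarith)
qed

lemma pd_pinv_pd_phi_real:
  assumes "0 < x" "x \<le> 1"
  shows "pd_pinv lam (ereal (pd_phi_real lam x)) = x"
proof -
  have "(THE y. y \<in> {0..1} \<and> pd_phi lam y = ereal (pd_phi_real lam x)) = x"
  proof (rule the_equality)
    fix y assume y: "y \<in> {0..1} \<and> pd_phi lam y = ereal (pd_phi_real lam x)"
    then have "y \<noteq> 0"
      using pd_phi_real_less_pd_phi_0[OF assms, of lam] by auto
    then show "y = x"
      using y assms pd_phi_real_le_iff[of x y lam] pd_phi_real_le_iff[of y x lam]
      by (auto simp: pd_phi_eq_real)
  qed (use assms in \<open>simp add: pd_phi_eq_real\<close>)
  then show ?thesis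
    using pd_phi_real_less_pd_phi_0[OF assms, of lam] by (simp add: pd_pinv_def)
qed

lemma pd_pinv_cases:
  assumes "0 \<le> t"
  obtains "pd_phi lam 0 \<le> ereal t" "pd_pinv lam (ereal t) = 0"
    | x where "0 < x" "x \<le> 1" "pd_phi_real lam x = t" "pd_pinv lam (ereal t) = x"
proof (cases "ereal t < pd_phi lam 0")
  case True
  then show ?thesis
    using pd_phi_real_surj[OF assms True] pd_pinv_pd_phi_real that(2) by metis
next
  case False
  then show ?thesis
    using that(1) by (simp add: pd_pinv_def)
qed

lemma pd_pinv_nonneg: "0 \<le> t \<Longrightarrow> 0 \<le> pd_pinv lam (ereal t)"
  by (cases rule: pd_pinv_cases[where lam = lam]) auto

lemma le_pd_pinv:
  assumes "0 \<le> t" "0 < x" "x \<le> 1" "t \<le> pd_phi_real lam x"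
  shows "x \<le> pd_pinv lam (ereal t)"
  using assms(1)
proof (cases rule: pd_pinv_cases[where lam = lam])
  case 1
  have "ereal t < pd_phi lam 0"
    using assms pd_phi_real_less_pd_phi_0[of x lam] by (meson ereal_less_eq(3) order_le_less_trans)
  then show ?thesis
    using 1(1) by simp
next
  case (2 y)
  then show ?thesis
    using pd_phi_real_le_iff[of y x lam] assms by simp
qed

lemma pd_phi_nonneg:
  assumes "u \<in> {0..1}"
  shows "0 \<le> pd_phi lam u"
proof (cases "u = 0")
  case True
  then show ?thesis by (simp add: pd_phi_def)
next
  case False
  then show ?thesis
    using assms pd_phi_real_nonneg[of u lam] by (simp add: pd_phi_eq_real)
qed

lemma pd_copula_eq_pd_pinv:
  "0 < u1 \<Longrightarrow> 0 < u2 \<Longrightarrow>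
    pd_copula lam u1 u2 = pd_pinv lam (ereal (pd_phi_real lam u1 + pd_phi_real lam u2))"
  by (simp add: pd_copula_def pd_phi_eq_real)

lemma pd_copula_eq_0:
  assumes "u1 \<in> {0..1}" "u2 \<in> {0..1}" "u1 = 0 \<or> u2 = 0"
  shows "pd_copula lam u1 u2 = 0"
proof -
  have "pd_phi lam 0 \<le> pd_phi lam u1 + pd_phi lam u2"
    using assms pd_phi_nonneg[of u1 lam] pd_phi_nonneg[of u2 lam]
    by (auto simp: add_increasing add_increasing2)
  then show ?thesis
    by (simp add: pd_copula_def pd_pinv_def not_less)
qed

theorem theorem3:
  fixes lam1 lam2 u1 u2 :: real
  assumes "lam1 < lam2"
    and "u1 \<in> {0..1}" and "u2 \<in> {0..1}"
  shows "pd_copula lam1 u1 u2 \<ge> pd_copula lam2 u1 u2"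
proof (cases "u1 = 0 \<or> u2 = 0")
  case True
  then show ?thesis
    using pd_copula_eq_0 assms by simp
next
  case False
  then have u: "0 < u1" "u1 \<le> 1" "0 < u2" "u2 \<le> 1"
    using assms by auto
  define s where "s lam = pd_phi_real lam u1 + pd_phi_real lam u2" for lam
  have s_nonneg: "0 \<le> s lam" for lam
    using u by (simp add: s_def pd_phi_real_nonneg)
  have copula: "pd_copula lam u1 u2 = pd_pinv lam (ereal (s lam))" for lam
    using u by (simp add: s_def pd_copula_eq_pd_pinv)
  from s_nonneg[of lam2] show ?thesis
  proof (cases rule: pd_pinv_cases[where lam = lam2])
    case 1
    then show ?thesis
      using pd_pinv_nonneg[OF s_nonneg] by (simp add: copula)
  next
    case (2 c)
    have "s lam1 \<le> pd_phi_real lam1 c"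
      using pd_phi_real_add_le[of lam1 lam2 u1 u2 c] 2 u assms(1) by (simp add: s_def)
    then show ?thesis
      using le_pd_pinv[OF s_nonneg] 2 by (simp add: copula)
  qed
qed

end
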